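(* Let $R$ be a unital ring and let $S$ be an inverse submonoid with zero of the multiplicative monoid of $R$. Then there is a Boolean inverse submonoid $S''$ of the multiplicative monoid of $R$ such that $S\subseteq S''\subseteq R$.
   Context: A Boolean inverse monoid is an inverse monoid with zero in which every pair of compatible elements ($s^{-1}t$, $st^{-1}$ idempotents) has a join with respect to the natural partial order, multiplication distributes over these joins, and the idempotents form a Boolean algebra (a distributive lattice with bottom in which each principal order ideal is a unital Boolean algebra). *)

theory Defs
  imports Main
begin

definition inverse_submonoid_zero :: "'a::ring_1 set \<Rightarrow> bool" where
  "inverse_submonoid_zero S \<longleftrightarrow>
     1 \<in> S \<and> 0 \<in> S \<and> (\<forall>s\<in>S. \<forall>t\<in>S. s * t \<in> S) \<and>
     (\<forall>s\<in>S. \<exists>!t. t \<in> S \<and> s * t * s = s \<and> t * s * t = t)"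

definition sinv :: "'a::ring_1 set \<Rightarrow> 'a \<Rightarrow> 'a" where
  "sinv S s = (THE t. t \<in> S \<and> s * t * s = s \<and> t * s * t = t)"

definition idems :: "'a::ring_1 set \<Rightarrow> 'a set" where
  "idems S = {e \<in> S. e * e = e}"

definition nat_le :: "'a::ring_1 set \<Rightarrow> 'a \<Rightarrow> 'a \<Rightarrow> bool" where
  "nat_le S s t \<longleftrightarrow> (\<exists>e\<in>idems S. s = e * t)"

definition compatible :: "'a::ring_1 set \<Rightarrow> 'a \<Rightarrow> 'a \<Rightarrow> bool" where
  "compatible S s t \<longleftrightarrow> sinv S s * t \<in> idems S \<and> s * sinv S t \<in> idems S"

definition is_lub :: "'a set \<Rightarrow> ('a \<Rightarrow> 'a \<Rightarrow> bool) \<Rightarrow> 'a \<Rightarrow> 'a \<Rightarrow> 'a \<Rightarrow> bool" where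
  "is_lub A le x y z \<longleftrightarrow> z \<in> A \<and> le x z \<and> le y z \<and> (\<forall>w\<in>A. le x w \<and> le y w \<longrightarrow> le z w)"

definition is_glb :: "'a set \<Rightarrow> ('a \<Rightarrow> 'a \<Rightarrow> bool) \<Rightarrow> 'a \<Rightarrow> 'a \<Rightarrow> 'a \<Rightarrow> bool" where
  "is_glb A le x y z \<longleftrightarrow> z \<in> A \<and> le z x \<and> le z y \<and> (\<forall>w\<in>A. le w x \<and> le w y \<longrightarrow> le w z)"

text \<open>The idempotents, under the natural partial order, form a distributive lattice with
  bottom 0 in which every principal order ideal is a (unital) Boolean algebra.\<close>
definition boolean_idems :: "'a::ring_1 set \<Rightarrow> bool" where
  "boolean_idems S \<longleftrightarrow>
     (let E = idems S; le = nat_le S in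
       (\<forall>x\<in>E. \<forall>y\<in>E. \<exists>z. is_lub E le x y z) \<and>
       (\<forall>x\<in>E. \<forall>y\<in>E. \<exists>z. is_glb E le x y z) \<and>
       0 \<in> E \<and> (\<forall>x\<in>E. le 0 x) \<and>
       (\<forall>x y z u v w m. x \<in> E \<longrightarrow> y \<in> E \<longrightarrow> z \<in> E \<longrightarrow>
          is_lub E le y z u \<longrightarrow> is_glb E le x u m \<longrightarrow>
          is_glb E le x y v \<longrightarrow> is_glb E le x z w \<longrightarrow> is_lub E le v w m) \<and>
       (\<forall>e\<in>E. \<forall>f\<in>E. le f e \<longrightarrow>
          (\<exists>g\<in>E. le g e \<and> is_glb E le f g 0 \<and> is_lub E le f g e)))"

definition boolean_inverse_submonoid :: "'a::ring_1 set \<Rightarrow> bool" where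
  "boolean_inverse_submonoid S \<longleftrightarrow>
     inverse_submonoid_zero S \<and>
     (\<forall>s\<in>S. \<forall>t\<in>S. compatible S s t \<longrightarrow> (\<exists>j. is_lub S (nat_le S) s t j)) \<and>
     (\<forall>s\<in>S. \<forall>t\<in>S. \<forall>u\<in>S. \<forall>j. compatible S s t \<longrightarrow> is_lub S (nat_le S) s t j \<longrightarrow>
        is_lub S (nat_le S) (u * s) (u * t) (u * j) \<and>
        is_lub S (nat_le S) (s * u) (t * u) (j * u)) \<and>
     boolean_idems S"

end

theory Submission
  imports Defs
begin

text \<open>Idempotents of an inverse monoid commute, so the idempotents of \<open>S\<close> generate, under
  products and complements \<open>x \<mapsto> 1 - x\<close>, a Boolean algebra \<open>B\<close> of commuting idempotents of
  the ring.  Take \<open>S''\<close> to be the set of elements \<open>a\<close> having an inverse \<open>b\<close> with \<open>a b, b a \<in> B\<close>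
  and \<open>a B b, b B a \<subseteq> B\<close>.  This is an inverse monoid whose idempotents are exactly \<open>B\<close>, ordered
  as a Boolean algebra with join \<open>e + f - e f\<close>; two compatible elements \<open>s, t\<close> have the join
  \<open>s + t (1 - s\<^sup>-\<^sup>1 s)\<close>, a sum of two elements with orthogonal domains and ranges, and an
  explicit computation shows that multiplication distributes over it.  Finally \<open>S \<subseteq> S''\<close> because conjugation
  by an element of \<open>S\<close> maps the idempotents of \<open>S\<close>, hence all of \<open>B\<close>, into \<open>B\<close>.\<close>

locale idempotent_algebra =
  fixes B :: "'a::ring_1 set"
  assumes zero_mem: "0 \<in> B" and one_mem: "1 \<in> B"
    and mult_mem: "x \<in> B \<Longrightarrow> y \<in> B \<Longrightarrow> x * y \<in> B"
    and compl_mem: "x \<in> B \<Longrightarrow> 1 - x \<in> B"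
    and mult_comm: "x \<in> B \<Longrightarrow> y \<in> B \<Longrightarrow> x * y = y * x"
    and idem: "x \<in> B \<Longrightarrow> x * x = x"
begin

lemma sup_mem: "x \<in> B \<Longrightarrow> y \<in> B \<Longrightarrow> x + y - x * y \<in> B"
  using compl_mem[OF mult_mem[OF compl_mem compl_mem]]
  by (simp add: algebra_simps)

lemma diff_mem: "x \<in> B \<Longrightarrow> y \<in> B \<Longrightarrow> x - x * y \<in> B"
  using mult_mem[OF _ compl_mem] by (simp add: algebra_simps)

lemma orthogonal_add_mem: "x \<in> B \<Longrightarrow> y \<in> B \<Longrightarrow> x * y = 0 \<Longrightarrow> x + y \<in> B"
  using sup_mem by fastforce

definition normal_inverse :: "'a \<Rightarrow> 'a \<Rightarrow> bool" where
  "normal_inverse a b \<longleftrightarrow> a * b * a = a \<and> b * a * b = b \<and> a * b \<in> B \<and> b * a \<in> B \<and>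
     (\<forall>e\<in>B. a * e * b \<in> B \<and> b * e * a \<in> B)"

definition normalizer :: "'a set" where
  "normalizer = {a. \<exists>b. normal_inverse a b}"

lemma normal_inverseD:
  assumes "normal_inverse a b"
  shows "a * b * a = a" "b * a * b = b" "a * b \<in> B" "b * a \<in> B"
    "e \<in> B \<Longrightarrow> a * e * b \<in> B" "e \<in> B \<Longrightarrow> b * e * a \<in> B"
  using assms unfolding normal_inverse_def by auto

lemma normal_inverse_sym: "normal_inverse a b \<Longrightarrow> normal_inverse b a"
  unfolding normal_inverse_def by blast

lemma normal_inverse_idem: "e \<in> B \<Longrightarrow> normal_inverse e e"
  unfolding normal_inverse_def by (simp add: idem mult_mem)

lemma normal_inverse_mult:
  assumes a: "normal_inverse a a'" and b: "normal_inverse b b'"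
  shows "normal_inverse (a * b) (b' * a')"
proof -
  note ha = normal_inverseD[OF a] and hb = normal_inverseD[OF b]
  have c: "(a' * a) * (b * b') = (b * b') * (a' * a)" by (rule mult_comm[OF ha(4) hb(3)])
  have "a * b * (b' * a') * (a * b) = a * ((a' * a) * (b * b')) * b"
    using c by (simp add: mult.assoc)
  also have "\<dots> = (a * a' * a) * (b * b' * b)" by (simp add: mult.assoc)
  finally have 1: "a * b * (b' * a') * (a * b) = a * b" using ha hb by simp
  have "b' * a' * (a * b) * (b' * a') = b' * ((b * b') * (a' * a)) * a'"
    using c[symmetric] by (simp add: mult.assoc)
  also have "\<dots> = (b' * b * b') * (a' * a * a')" by (simp add: mult.assoc)
  finally have 2: "b' * a' * (a * b) * (b' * a') = b' * a'" using ha hb by simp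
  have "a * (b * e * b') * a' \<in> B \<and> b' * (a' * e * a) * b \<in> B" if "e \<in> B" for e
    using ha(5,6) hb(5,6) that by blast
  then show ?thesis
    unfolding normal_inverse_def using 1 2 ha(5)[OF hb(3)] hb(6)[OF ha(4)]
    by (simp add: mult.assoc)
qed

lemma normal_inverse_idem_mem:
  assumes ab: "normal_inverse a b" and aa: "a * a = a"
  shows "a \<in> B"
proof -
  note h = normal_inverseD[OF ab]
  have "(b * a) * (a * b) = b * (a * a) * b" by (simp add: mult.assoc)
  then have ba_ab: "(b * a) * (a * b) = b" using aa h(2) by simp
  then have ab_ba: "(a * b) * (b * a) = b" using mult_comm[OF h(3) h(4)] by simp
  have aab: "a * (a * b) = a * b" using aa by (simp add: mult.assoc[symmetric])
  have baa: "(b * a) * a = b * a" using aa by (simp add: mult.assoc)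
  have "a * b * a = a * ((a * b) * (b * a)) * a" using ab_ba by simp
  also have "\<dots> = (a * (a * b)) * ((b * a) * a)" by (simp add: mult.assoc)
  also have "\<dots> = (a * b) * (b * a)" using aab baa by simp
  finally have "a = b" using h(1) ab_ba by simp
  then show ?thesis using mult_mem[OF h(4) h(3)] ba_ab by simp
qed

lemma normalizerI: "normal_inverse a b \<Longrightarrow> a \<in> normalizer"
  unfolding normalizer_def by blast

lemma normalizer_mult: "a \<in> normalizer \<Longrightarrow> b \<in> normalizer \<Longrightarrow> a * b \<in> normalizer"
  unfolding normalizer_def using normal_inverse_mult by blast

lemma idem_in_normalizer: "e \<in> B \<Longrightarrow> e \<in> normalizer"
  using normal_inverse_idem normalizerI by blast

text \<open>Both \<open>a c\<close> and \<open>c a\<close> are idempotents of the normalizer, hence lie in the commutative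
  algebra \<open>B\<close>; this is the usual argument for uniqueness of inverses.\<close>
lemma normal_inverse_unique:
  assumes ab: "normal_inverse a b" and c: "c \<in> normalizer"
    and aca: "a * c * a = a" and cac: "c * a * c = c"
  shows "c = b"
proof -
  note h = normal_inverseD[OF ab]
  from c obtain c' where c': "normal_inverse c c'" unfolding normalizer_def by blast
  have ac: "a * c \<in> B"
    using normal_inverse_idem_mem[OF normal_inverse_mult[OF ab c']] aca
    by (simp add: mult.assoc[symmetric])
  have ca: "c * a \<in> B"
    using normal_inverse_idem_mem[OF normal_inverse_mult[OF c' ab]] cac
    by (simp add: mult.assoc[symmetric])
  have "b = b * (a * c * a) * b" using h aca by simp
  also have "\<dots> = ((b * a) * (c * a)) * b" by (simp add: mult.assoc)
  also have "\<dots> = ((c * a) * (b * a)) * b" using mult_comm[OF h(4) ca] by simp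
  finally have b: "b = c * (a * b)" using h by (simp add: mult.assoc)
  have "a * b = (a * c * a) * b" using aca by simp
  also have "\<dots> = (a * c) * (a * b)" by (simp add: mult.assoc)
  also have "\<dots> = (a * b) * (a * c)" using mult_comm[OF ac h(3)] by simp
  finally have "a * b = a * c" using h by (simp add: mult.assoc[symmetric])
  with b cac show ?thesis by (simp add: mult.assoc)
qed

lemma normal_inverse_is_inverse:
  assumes "normal_inverse a b"
  shows "b \<in> normalizer \<and> a * b * a = a \<and> b * a * b = b"
  using normal_inverseD(1,2)[OF assms] normalizerI[OF normal_inverse_sym[OF assms]] by simp

lemma normal_inverse_ex1:
  assumes "normal_inverse a b"
  shows "\<exists>!t. t \<in> normalizer \<and> a * t * a = a \<and> t * a * t = t"
proof (rule ex1I[of _ b])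
  show "b \<in> normalizer \<and> a * b * a = a \<and> b * a * b = b"
    using normal_inverse_is_inverse[OF assms] .
  show "t = b" if "t \<in> normalizer \<and> a * t * a = a \<and> t * a * t = t" for t
    using normal_inverse_unique[OF assms] that by simp
qed

lemma sinv_normalizer_eq:
  assumes "normal_inverse a b"
  shows "sinv normalizer a = b"
  unfolding sinv_def
  using the1_equality[OF normal_inverse_ex1 normal_inverse_is_inverse, OF assms assms] .

lemma normal_inverse_sinv:
  assumes "a \<in> normalizer"
  shows "normal_inverse a (sinv normalizer a)"
proof -
  obtain b where "normal_inverse a b" using assms unfolding normalizer_def by blast
  then show ?thesis by (simp add: sinv_normalizer_eq)
qed

lemma inverse_submonoid_zero_normalizer: "inverse_submonoid_zero normalizer"
  unfolding inverse_submonoid_zero_def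
proof (intro conjI ballI)
  show "1 \<in> normalizer" "0 \<in> normalizer"
    using idem_in_normalizer one_mem zero_mem by blast+
  show "s * t \<in> normalizer" if "s \<in> normalizer" "t \<in> normalizer" for s t
    using normalizer_mult that .
  show "\<exists>!t. t \<in> normalizer \<and> s * t * s = s \<and> t * s * t = t" if "s \<in> normalizer" for s
    using normal_inverse_ex1[OF normal_inverse_sinv[OF that]] .
qed

lemma idems_normalizer: "idems normalizer = B"
proof
  show "idems normalizer \<subseteq> B"
    using normal_inverse_idem_mem normal_inverse_sinv unfolding idems_def by blast
  show "B \<subseteq> idems normalizer"
    using idem_in_normalizer idem unfolding idems_def by blast
qed

lemma nat_le_normalizer_iff: "nat_le normalizer x y \<longleftrightarrow> (\<exists>e\<in>B. x = e * y)"
  unfolding nat_le_def idems_normalizer ..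

lemma nat_le_idem_iff: "x \<in> B \<Longrightarrow> y \<in> B \<Longrightarrow> nat_le normalizer x y \<longleftrightarrow> x = x * y"
  unfolding nat_le_normalizer_iff by (metis idem mult.assoc)

lemma nat_le_normalizer_antisym: "nat_le normalizer x y \<Longrightarrow> nat_le normalizer y x \<Longrightarrow> x = y"
  unfolding nat_le_normalizer_iff
proof (elim bexE)
  fix e f assume e: "e \<in> B" "x = e * y" and f: "f \<in> B" "y = f * x"
  have y: "y = f * e * y" using e f by (simp add: mult.assoc)
  then have "e * y = e * f * e * y" by (metis mult.assoc)
  also have "\<dots> = f * e * y" using e f by (metis mult_comm idem mult.assoc)
  finally show "x = y" using e y by simp
qed

lemma is_lub_nat_le_unique:
  "is_lub A (nat_le normalizer) x y z \<Longrightarrow> is_lub A (nat_le normalizer) x y z' \<Longrightarrow> z = z'"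
  unfolding is_lub_def using nat_le_normalizer_antisym by blast

lemma is_glb_nat_le_unique:
  "is_glb A (nat_le normalizer) x y z \<Longrightarrow> is_glb A (nat_le normalizer) x y z' \<Longrightarrow> z = z'"
  unfolding is_glb_def using nat_le_normalizer_antisym by blast

lemma is_lub_idems:
  assumes x: "x \<in> B" and y: "y \<in> B"
  shows "is_lub B (nat_le normalizer) x y (x + y - x * y)"
proof -
  have j: "x + y - x * y \<in> B" using sup_mem x y .
  have xy: "x * x = x" "y * y = y" "y * x = x * y" using x y idem mult_comm by auto
  then have "x * (x * y) = x * y" "y * (x * y) = x * y" "x * (y * y) = x * y"
    by (metis mult.assoc)+
  note simps = xy this
  show ?thesis unfolding is_lub_def
  proof (intro conjI ballI impI)
    show "nat_le normalizer x (x + y - x * y)" "nat_le normalizer y (x + y - x * y)"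
      using nat_le_idem_iff[OF x j] nat_le_idem_iff[OF y j] simps
      by (simp_all add: algebra_simps)
    fix w assume w: "w \<in> B" "nat_le normalizer x w \<and> nat_le normalizer y w"
    then have "x = x * w" "y = y * w" using nat_le_idem_iff x y by auto
    then show "nat_le normalizer (x + y - x * y) w"
      using nat_le_idem_iff[OF j w(1)] by (simp add: algebra_simps)
  qed (fact j)
qed

lemma is_glb_idems:
  assumes x: "x \<in> B" and y: "y \<in> B"
  shows "is_glb B (nat_le normalizer) x y (x * y)"
proof -
  have m: "x * y \<in> B" using mult_mem x y .
  have xy: "x * x = x" "y * y = y" "y * x = x * y" using x y idem mult_comm by auto
  show ?thesis unfolding is_glb_def
  proof (intro conjI ballI impI)
    show "nat_le normalizer (x * y) x" "nat_le normalizer (x * y) y"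
      using nat_le_idem_iff[OF m x] nat_le_idem_iff[OF m y] xy by (metis mult.assoc)+
    fix w assume w: "w \<in> B" "nat_le normalizer w x \<and> nat_le normalizer w y"
    then have "w = w * x" "w = w * y" using nat_le_idem_iff x y by auto
    then show "nat_le normalizer w (x * y)"
      using nat_le_idem_iff[OF w(1) m] by (metis mult.assoc)
  qed (fact m)
qed

lemma idems_distrib:
  assumes "x \<in> B" "y \<in> B" "z \<in> B"
  shows "x * (y + z - y * z) = x * y + x * z - (x * y) * (x * z)"
proof -
  have "(x * y) * (x * z) = (x * x) * (y * z)"
    using mult_comm[OF assms(1,2)] by (metis mult.assoc)
  then show ?thesis using idem[OF assms(1)] by (simp add: algebra_simps)
qed

lemma idems_relative_complement:
  assumes e: "e \<in> B" and f: "f \<in> B" and fe: "nat_le normalizer f e"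
  shows "is_glb B (nat_le normalizer) f (e - e * f) 0 \<and> is_lub B (nat_le normalizer) f (e - e * f) e
    \<and> nat_le normalizer (e - e * f) e"
proof -
  have g: "e - e * f \<in> B" using diff_mem e f .
  have ef: "e * f = f" "f * e = f" "e * e = e" "f * f = f"
    using nat_le_idem_iff[OF f e] fe mult_comm[OF e f] idem e f by auto
  then have "f * (e - e * f) = 0" "f + (e - e * f) - f * (e - e * f) = e"
    "e - e * f = (e - e * f) * e"
    by (simp_all add: algebra_simps mult.assoc[symmetric])
  then show ?thesis
    using is_glb_idems[OF f g] is_lub_idems[OF f g] nat_le_idem_iff[OF g e] by simp
qed

lemma boolean_idems_normalizer: "boolean_idems normalizer"
  unfolding boolean_idems_def Let_def idems_normalizer
proof (intro conjI ballI allI impI)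
  show "\<exists>z. is_lub B (nat_le normalizer) x y z" if "x \<in> B" "y \<in> B" for x y
    using is_lub_idems that by blast
  show "\<exists>z. is_glb B (nat_le normalizer) x y z" if "x \<in> B" "y \<in> B" for x y
    using is_glb_idems that by blast
  show "nat_le normalizer 0 x" if "x \<in> B" for x
    using nat_le_idem_iff zero_mem that by simp
  show "\<exists>g\<in>B. nat_le normalizer g e \<and> is_glb B (nat_le normalizer) f g 0
      \<and> is_lub B (nat_le normalizer) f g e"
    if "e \<in> B" "f \<in> B" "nat_le normalizer f e" for e f
    using idems_relative_complement[OF that] diff_mem that by blast
next
  fix x y z u v w m
  assume x: "x \<in> B" and y: "y \<in> B" and z: "z \<in> B"
    and u: "is_lub B (nat_le normalizer) y z u" and m: "is_glb B (nat_le normalizer) x u m"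
    and v: "is_glb B (nat_le normalizer) x y v" and w: "is_glb B (nat_le normalizer) x z w"
  have "u = y + z - y * z" using is_lub_nat_le_unique[OF u is_lub_idems[OF y z]] .
  then have "m = x * (y + z - y * z)"
    using is_glb_nat_le_unique[OF m is_glb_idems[OF x]] sup_mem[OF y z] by simp
  moreover have "v = x * y" "w = x * z"
    using is_glb_nat_le_unique[OF v is_glb_idems[OF x y]]
      is_glb_nat_le_unique[OF w is_glb_idems[OF x z]] by auto
  ultimately show "is_lub B (nat_le normalizer) v w m"
    using is_lub_idems[OF mult_mem[OF x y] mult_mem[OF x z]] idems_distrib[OF x y z] by simp
qed (fact zero_mem)

abbreviation ninv :: "'a \<Rightarrow> 'a" where
  "ninv a \<equiv> sinv normalizer a"

lemma normalizerD:
  assumes "a \<in> normalizer"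
  shows "a * ninv a * a = a" "ninv a * a * ninv a = ninv a"
    "a * ninv a \<in> B" "ninv a * a \<in> B"
    "e \<in> B \<Longrightarrow> a * e * ninv a \<in> B" "e \<in> B \<Longrightarrow> ninv a * e * a \<in> B"
  using normal_inverseD[OF normal_inverse_sinv[OF assms]] by auto

lemma ninv_mem: "a \<in> normalizer \<Longrightarrow> ninv a \<in> normalizer"
  using normal_inverse_is_inverse normal_inverse_sinv by blast

lemma ninv_idem: "e \<in> B \<Longrightarrow> ninv e = e"
  using sinv_normalizer_eq normal_inverse_idem by blast

lemma ninv_mult: "a \<in> normalizer \<Longrightarrow> b \<in> normalizer \<Longrightarrow> ninv (a * b) = ninv b * ninv a"
  using sinv_normalizer_eq normal_inverse_mult normal_inverse_sinv by blast

lemma ninv_ninv: "a \<in> normalizer \<Longrightarrow> ninv (ninv a) = a"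
  using sinv_normalizer_eq normal_inverse_sym normal_inverse_sinv by blast

lemma compatible_normalizer_iff:
  "compatible normalizer s t \<longleftrightarrow> ninv s * t \<in> B \<and> s * ninv t \<in> B"
  unfolding compatible_def idems_normalizer ..

lemma compatible_ninv_commute:
  assumes s: "s \<in> normalizer" and t: "t \<in> normalizer"
    and p: "ninv s * t \<in> B" and q: "s * ninv t \<in> B"
  shows "ninv t * s = ninv s * t" "t * ninv s = s * ninv t"
proof -
  have "ninv (ninv s * t) = ninv t * s" using ninv_mult[OF ninv_mem[OF s] t] ninv_ninv[OF s] by simp
  then show "ninv t * s = ninv s * t" using ninv_idem[OF p] by simp
  have "ninv (s * ninv t) = t * ninv s" using ninv_mult[OF s ninv_mem[OF t]] ninv_ninv[OF t] by simp
  then show "t * ninv s = s * ninv t" using ninv_idem[OF q] by simp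
qed

text \<open>Compatible elements agree on the idempotent \<open>P = s\<^sup>-\<^sup>1 t\<close>: writing \<open>x = s P\<close> and
  \<open>y = t P\<close>, each is obtained from the other by an idempotent of \<open>B\<close>, so \<open>x = y\<close>.\<close>
lemma compatible_agree:
  assumes s: "s \<in> normalizer" and t: "t \<in> normalizer"
    and p: "ninv s * t \<in> B" and q: "s * ninv t \<in> B"
  shows "s * (ninv s * t) = t * (ninv s * t)"
proof -
  define P where "P = ninv s * t"
  define x where "x = s * P"
  define y where "y = t * P"
  define r1 where "r1 = s * P * ninv s"
  define r2 where "r2 = t * P * ninv t"
  have PB: "P \<in> B" using p P_def by simp
  have r1B: "r1 \<in> B" unfolding r1_def using normalizerD(5)[OF s PB] .
  have r2B: "r2 \<in> B" unfolding r2_def using normalizerD(5)[OF t PB] .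
  have PP: "P * P = P" using idem[OF PB] .
  have "r1 * y = s * P * (ninv s * t) * P" unfolding r1_def y_def by (simp add: mult.assoc)
  then have x: "r1 * y = x" using PP unfolding x_def P_def[symmetric] by (simp add: mult.assoc)
  have "r2 * x = t * P * (ninv t * s) * P" unfolding r2_def x_def by (simp add: mult.assoc)
  then have y: "r2 * x = y"
    using PP compatible_ninv_commute(1)[OF s t p q] unfolding y_def P_def[symmetric]
    by (simp add: mult.assoc)
  have "y = r2 * (r1 * (r2 * x))" using x y by simp
  also have "\<dots> = (r2 * r1) * (r2 * x)" by (simp add: mult.assoc)
  also have "\<dots> = (r1 * r2) * (r2 * x)" using mult_comm[OF r1B r2B] by simp
  also have "\<dots> = r1 * ((r2 * r2) * x)" by (simp add: mult.assoc)
  also have "\<dots> = r1 * (r2 * x)" using idem[OF r2B] by simp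
  finally have "y = x" using x y by simp
  then show ?thesis unfolding x_def y_def P_def by simp
qed

lemma normal_inverse_cross_zero:
  assumes a: "normal_inverse a a'" and b: "normal_inverse b b'"
    and d: "(a' * a) * (b' * b) = 0" and e: "e \<in> B"
  shows "a * e * b' = 0"
proof -
  note ha = normal_inverseD[OF a] and hb = normal_inverseD[OF b]
  have "a * e * b' = (a * a' * a) * e * (b' * b * b')" using ha hb by simp
  also have "\<dots> = a * ((a' * a) * e) * (b' * b) * b'" by (simp add: mult.assoc)
  also have "\<dots> = a * e * ((a' * a) * (b' * b)) * b'"
    using mult_comm[OF ha(4) e] by (simp add: mult.assoc[symmetric])
  finally show ?thesis using d by simp
qed

lemma normal_inverse_add:
  assumes a: "normal_inverse a a'" and b: "normal_inverse b b'"
    and d: "(a' * a) * (b' * b) = 0" and r: "(a * a') * (b * b') = 0"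
  shows "normal_inverse (a + b) (a' + b')"
proof -
  note ha = normal_inverseD[OF a] and hb = normal_inverseD[OF b]
  have d': "(b' * b) * (a' * a) = 0" using d by (simp add: mult_comm[OF hb(4) ha(4)])
  have r': "(b * b') * (a * a') = 0" using r by (simp add: mult_comm[OF hb(3) ha(3)])
  note z = normal_inverse_cross_zero[OF a b d] normal_inverse_cross_zero[OF b a d']
    normal_inverse_cross_zero[OF normal_inverse_sym[OF a] normal_inverse_sym[OF b] r]
    normal_inverse_cross_zero[OF normal_inverse_sym[OF b] normal_inverse_sym[OF a] r']
  note z1 = z[OF one_mem, simplified]
  have regular: "a * (a' * a) = a" "a' * (a * a') = a'" "b * (b' * b) = b" "b' * (b * b') = b'"
    using ha hb by (simp_all add: mult.assoc)
  have conjugation: "(a + b) * e * (a' + b') \<in> B \<and> (a' + b') * e * (a + b) \<in> B" if e: "e \<in> B" for e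
  proof -
    have "(a + b) * e * (a' + b') = a * e * a' + b * e * b'"
         "(a' + b') * e * (a + b) = a' * e * a + b' * e * b"
      using z[OF e] by (simp_all add: algebra_simps)
    moreover have "(a * e * a') * (b * e * b') = a * e * (a' * b) * e * b'"
      "(a' * e * a) * (b' * e * b) = a' * e * (a * b') * e * b"
      by (simp_all add: mult.assoc)
    ultimately show ?thesis
      using orthogonal_add_mem ha(5,6) hb(5,6) e z1 by simp
  qed
  have "(a + b) * (a' + b') = a * a' + b * b'" "(a' + b') * (a + b) = a' * a + b' * b"
    using z1 by (simp_all add: algebra_simps)
  moreover have "a * a' + b * b' \<in> B" "a' * a + b' * b \<in> B"
    using orthogonal_add_mem ha(3,4) hb(3,4) d r by simp_all
  moreover have "(a + b) * (a' + b') * (a + b) = a + b" "(a' + b') * (a + b) * (a' + b') = a' + b'"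
    using z1 regular by (simp_all add: algebra_simps)
  ultimately show ?thesis unfolding normal_inverse_def using conjugation by simp
qed

text \<open>\<open>t (1 - s\<^sup>-\<^sup>1 s)\<close> is the restriction of \<open>t\<close> to the complement of the domain of \<open>s\<close>,
  so it is orthogonal to \<open>s\<close>.\<close>
definition compatible_join :: "'a \<Rightarrow> 'a \<Rightarrow> 'a" where
  "compatible_join s t = s + t * (1 - ninv s * s)"

lemma compatible_restrict:
  assumes s: "s \<in> normalizer" and t: "t \<in> normalizer" and c: "compatible normalizer s t"
  shows "ninv s * t * (ninv s * s) = ninv s * t" "t * (ninv s * s) = t * (ninv s * t)"
proof -
  have p: "ninv s * t \<in> B" and q: "s * ninv t \<in> B"
    using c unfolding compatible_normalizer_iff by auto
  note comm = compatible_ninv_commute[OF s t p q]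
  have "ninv s * t * (ninv s * s) = ninv s * (t * ninv s) * s" by (simp add: mult.assoc)
  also have "\<dots> = (ninv s * s) * (ninv t * s)" using comm(2) by (simp add: mult.assoc)
  also have "\<dots> = ninv s * t"
    using comm(1) normalizerD(2)[OF s] by (simp add: mult.assoc[symmetric])
  finally show "ninv s * t * (ninv s * s) = ninv s * t" .
  have "t * (ninv s * s) = s * (ninv t * s)" using comm(2) by (simp add: mult.assoc[symmetric])
  then show "t * (ninv s * s) = t * (ninv s * t)"
    using comm(1) compatible_agree[OF s t p q] by simp
qed

lemma compatible_join_normal_inverse:
  assumes s: "s \<in> normalizer" and t: "t \<in> normalizer" and c: "compatible normalizer s t"
  shows "normal_inverse (compatible_join s t) (ninv s + (1 - ninv s * s) * ninv t)"
proof -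
  define ds where "ds = ninv s * s"
  have dsB: "ds \<in> B" and cdsB: "1 - ds \<in> B" unfolding ds_def using normalizerD(4)[OF s] compl_mem by auto
  have dsds: "ds * (1 - ds) = 0" "(1 - ds) * (1 - ds) = 1 - ds"
    using idem[OF dsB] by (simp_all add: algebra_simps)
  have "(ninv s * s) * (((1 - ds) * ninv t) * (t * (1 - ds)))
      = (ds * (1 - ds)) * (ninv t * (t * (1 - ds)))"
    unfolding ds_def by (simp add: mult.assoc)
  then have d: "(ninv s * s) * (((1 - ds) * ninv t) * (t * (1 - ds))) = 0" using dsds by simp
  have "(s * ninv s) * ((t * (1 - ds)) * ((1 - ds) * ninv t))
      = s * (ninv s * t) * ((1 - ds) * (1 - ds)) * ninv t"
    by (simp add: mult.assoc)
  also have "\<dots> = s * (ninv s * t - ninv s * t * ds) * ninv t"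
    using dsds(2) by (simp add: algebra_simps)
  finally have r: "(s * ninv s) * ((t * (1 - ds)) * ((1 - ds) * ninv t)) = 0"
    using compatible_restrict(1)[OF s t c] unfolding ds_def by simp
  show ?thesis
    using normal_inverse_add[OF normal_inverse_sinv[OF s]
        normal_inverse_mult[OF normal_inverse_sinv[OF t] normal_inverse_idem[OF cdsB]] d r]
    unfolding compatible_join_def ds_def .
qed

lemma compatible_join_upper:
  assumes s: "s \<in> normalizer" and t: "t \<in> normalizer" and c: "compatible normalizer s t"
  shows "nat_le normalizer s (compatible_join s t)" "nat_le normalizer t (compatible_join s t)"
proof -
  have p: "ninv s * t \<in> B" using c unfolding compatible_normalizer_iff by auto
  note r = compatible_restrict[OF s t c]
  have "s * ninv s * compatible_join s t = s * ninv s * s + s * (ninv s * t - ninv s * t * (ninv s * s))"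
    unfolding compatible_join_def by (simp add: algebra_simps)
  then have "s = s * ninv s * compatible_join s t" using r(1) normalizerD(1)[OF s] by simp
  then show "nat_le normalizer s (compatible_join s t)"
    unfolding nat_le_normalizer_iff using normalizerD(3)[OF s] by blast
  have "t * ninv t * compatible_join s t = t * (ninv t * s) + t * ninv t * t - t * ninv t * t * (ninv s * s)"
    unfolding compatible_join_def by (simp add: algebra_simps)
  then have "t = t * ninv t * compatible_join s t"
    using r(2) normalizerD(1)[OF t] compatible_ninv_commute(1)[OF s t p] c
    unfolding compatible_normalizer_iff by simp
  then show "nat_le normalizer t (compatible_join s t)"
    unfolding nat_le_normalizer_iff using normalizerD(3)[OF t] by blast
qed

text \<open>If \<open>s = e\<^sub>1 w\<close> and \<open>t = e\<^sub>2 w\<close>, the join is \<open>(e\<^sub>1 \<or> e\<^sub>2) w\<close>.\<close>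
lemma compatible_join_least:
  assumes s: "s \<in> normalizer" and w: "w \<in> normalizer"
    and sw: "nat_le normalizer s w" and tw: "nat_le normalizer t w"
  shows "nat_le normalizer (compatible_join s t) w"
proof -
  obtain e1 e2 where e: "e1 \<in> B" "e2 \<in> B" "s = e1 * w" "t = e2 * w"
    using sw tw unfolding nat_le_normalizer_iff by blast
  note hw = normalizerD[OF w]
  have "ninv s = ninv w * e1"
    using ninv_mult[OF idem_in_normalizer[OF e(1)] w] ninv_idem[OF e(1)] e(3) by simp
  then have "t * (ninv s * s) = e2 * ((w * ninv w) * (e1 * e1)) * w"
    using e by (simp add: mult.assoc)
  also have "\<dots> = e2 * (e1 * (w * ninv w)) * w"
    using idem[OF e(1)] mult_comm[OF hw(3) e(1)] by simp
  also have "\<dots> = (e1 * e2) * (w * ninv w * w)"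
    using mult_comm[OF e(1) e(2)] by (simp add: mult.assoc)
  finally have "compatible_join s t = (e1 + e2 - e1 * e2) * w"
    unfolding compatible_join_def using e hw(1) by (simp add: algebra_simps)
  then show ?thesis unfolding nat_le_normalizer_iff using sup_mem[OF e(1,2)] by blast
qed

lemma is_lub_compatible_join:
  assumes "s \<in> normalizer" "t \<in> normalizer" "compatible normalizer s t"
  shows "is_lub normalizer (nat_le normalizer) s t (compatible_join s t)"
  unfolding is_lub_def
proof (intro conjI ballI impI)
  show "compatible_join s t \<in> normalizer"
    using normalizerI[OF compatible_join_normal_inverse[OF assms]] .
  show "nat_le normalizer s (compatible_join s t)" "nat_le normalizer t (compatible_join s t)"
    using compatible_join_upper[OF assms] by auto
  show "nat_le normalizer (compatible_join s t) w"
    if "w \<in> normalizer" "nat_le normalizer s w \<and> nat_le normalizer t w" for w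
    using compatible_join_least[OF assms(1)] that by blast
qed

lemma compatible_mult_left:
  assumes s: "s \<in> normalizer" and t: "t \<in> normalizer" and u: "u \<in> normalizer"
    and c: "compatible normalizer s t"
  shows "compatible normalizer (u * s) (u * t)"
    "compatible_join (u * s) (u * t) = u * compatible_join s t"
proof -
  have p: "ninv s * t \<in> B" and q: "s * ninv t \<in> B"
    using c unfolding compatible_normalizer_iff by auto
  note hs = normalizerD[OF s] and hu = normalizerD[OF u]
  have ius: "ninv (u * s) = ninv s * ninv u" and iut: "ninv (u * t) = ninv t * ninv u"
    using ninv_mult u s t by auto
  have "ninv s * (ninv u * u) * t = ninv s * (s * ninv s) * (ninv u * u) * t"
    using hs(2) by (simp add: mult.assoc)
  also have "\<dots> = (ninv s * (ninv u * u) * s) * (ninv s * t)"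
    using mult_comm[OF hs(3) hu(4)] by (simp add: mult.assoc)
  finally have "ninv (u * s) * (u * t) \<in> B"
    using mult_mem[OF hs(6)[OF hu(4)] p] ius by (simp add: mult.assoc)
  moreover have "u * s * ninv (u * t) \<in> B" using hu(5)[OF q] iut by (simp add: mult.assoc)
  ultimately show "compatible normalizer (u * s) (u * t)"
    unfolding compatible_normalizer_iff by simp
  have "u * t * (ninv s * ninv u * (u * s)) = u * (t * ninv s) * (ninv u * u) * s"
    by (simp add: mult.assoc)
  also have "\<dots> = (u * ninv u * u) * (t * ninv s) * s"
    using mult_comm[OF hu(4), of "t * ninv s"] compatible_ninv_commute(2)[OF s t p q] q
    by (simp add: mult.assoc)
  also have "\<dots> = u * (t * ninv s) * s" using hu(1) by simp
  finally have "u * t * (ninv (u * s) * (u * s)) = u * t * (ninv s * s)"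
    using ius by (simp add: mult.assoc)
  then show "compatible_join (u * s) (u * t) = u * compatible_join s t"
    unfolding compatible_join_def by (simp add: algebra_simps)
qed

lemma compatible_mult_right:
  assumes s: "s \<in> normalizer" and t: "t \<in> normalizer" and u: "u \<in> normalizer"
    and c: "compatible normalizer s t"
  shows "compatible normalizer (s * u) (t * u)"
    "compatible_join (s * u) (t * u) = compatible_join s t * u"
proof -
  have p: "ninv s * t \<in> B" and q: "s * ninv t \<in> B"
    using c unfolding compatible_normalizer_iff by auto
  note hs = normalizerD[OF s] and ht = normalizerD[OF t] and hu = normalizerD[OF u]
  have ius: "ninv (s * u) = ninv u * ninv s" and iut: "ninv (t * u) = ninv u * ninv t"
    using ninv_mult u s t by auto
  have "s * (u * ninv u) * ninv t = s * (u * ninv u) * (ninv t * t) * ninv t"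
    using ht(2) by (simp add: mult.assoc)
  also have "\<dots> = (s * ninv t) * (t * (u * ninv u) * ninv t)"
    using mult_comm[OF hu(3) ht(4)] by (simp add: mult.assoc)
  finally have "s * u * ninv (t * u) \<in> B"
    using mult_mem[OF q ht(5)[OF hu(3)]] iut by (simp add: mult.assoc)
  moreover have "ninv (s * u) * (t * u) \<in> B" using hu(6)[OF p] ius by (simp add: mult.assoc)
  ultimately show "compatible normalizer (s * u) (t * u)"
    unfolding compatible_normalizer_iff by simp
  have "t * u * (ninv u * ninv s * (s * u)) = t * ((u * ninv u) * (ninv s * s)) * u"
    by (simp add: mult.assoc)
  also have "\<dots> = t * (ninv s * s) * (u * ninv u * u)"
    using mult_comm[OF hu(3) hs(4)] by (simp add: mult.assoc)
  finally have "t * u * (ninv (s * u) * (s * u)) = t * (ninv s * s) * u"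
    using hu(1) ius by simp
  then show "compatible_join (s * u) (t * u) = compatible_join s t * u"
    unfolding compatible_join_def by (simp add: algebra_simps)
qed

lemma boolean_inverse_submonoid_normalizer: "boolean_inverse_submonoid normalizer"
  unfolding boolean_inverse_submonoid_def
proof (intro conjI ballI allI impI)
  show "\<exists>j. is_lub normalizer (nat_le normalizer) s t j"
    if "s \<in> normalizer" "t \<in> normalizer" "compatible normalizer s t" for s t
    using is_lub_compatible_join[OF that] by blast
next
  fix s t u j
  assume s: "s \<in> normalizer" and t: "t \<in> normalizer" and u: "u \<in> normalizer"
    and c: "compatible normalizer s t" and j: "is_lub normalizer (nat_le normalizer) s t j"
  have "j = compatible_join s t"
    using is_lub_nat_le_unique[OF j is_lub_compatible_join[OF s t c]] .
  then show "is_lub normalizer (nat_le normalizer) (u * s) (u * t) (u * j)"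
    "is_lub normalizer (nat_le normalizer) (s * u) (t * u) (j * u)"
    using is_lub_compatible_join[OF normalizer_mult[OF u s] normalizer_mult[OF u t]
        compatible_mult_left(1)[OF s t u c]]
      is_lub_compatible_join[OF normalizer_mult[OF s u] normalizer_mult[OF t u]
        compatible_mult_right(1)[OF s t u c]]
    by (simp_all add: compatible_mult_left(2)[OF s t u c] compatible_mult_right(2)[OF s t u c])
qed (fact inverse_submonoid_zero_normalizer boolean_idems_normalizer)+

end

inductive_set boolean_closure :: "'a::ring_1 set \<Rightarrow> 'a set" for S where
  idem: "e \<in> idems S \<Longrightarrow> e \<in> boolean_closure S"
| mult: "x \<in> boolean_closure S \<Longrightarrow> y \<in> boolean_closure S \<Longrightarrow> x * y \<in> boolean_closure S"
| compl: "x \<in> boolean_closure S \<Longrightarrow> 1 - x \<in> boolean_closure S"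

lemma inverse_submonoid_zeroD:
  assumes "inverse_submonoid_zero S"
  shows "1 \<in> S" "0 \<in> S" "s \<in> S \<Longrightarrow> t \<in> S \<Longrightarrow> s * t \<in> S"
  using assms unfolding inverse_submonoid_zero_def by auto

context
  fixes S :: "'a::ring_1 set"
  assumes S: "inverse_submonoid_zero S"
begin

lemma sinv_inverse:
  assumes "s \<in> S"
  shows "sinv S s \<in> S" "s * sinv S s * s = s" "sinv S s * s * sinv S s = sinv S s"
proof -
  have "\<exists>!t. t \<in> S \<and> s * t * s = s \<and> t * s * t = t"
    using S assms unfolding inverse_submonoid_zero_def by blast
  from theI'[OF this] show "sinv S s \<in> S" "s * sinv S s * s = s"
    "sinv S s * s * sinv S s = sinv S s" unfolding sinv_def by auto
qed

lemma sinv_unique: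
  assumes "s \<in> S" "t \<in> S" "s * t * s = s" "t * s * t = t"
  shows "t = sinv S s"
  using S assms sinv_inverse[OF assms(1)] unfolding inverse_submonoid_zero_def by blast

text \<open>The inverse \<open>b\<close> of \<open>a = e f\<close> coincides with the inverse \<open>f b e\<close>, hence is idempotent;
  then \<open>a\<close> and \<open>b\<close> are both inverses of \<open>b\<close>.\<close>
lemma idems_mult_idem:
  assumes e: "e \<in> S" "e * e = e" and f: "f \<in> S" "f * f = f"
  shows "(e * f) * (e * f) = e * f"
proof -
  define a where "a = e * f"
  define b where "b = sinv S a"
  define c where "c = f * b * e"
  have aS: "a \<in> S" unfolding a_def using inverse_submonoid_zeroD(3)[OF S] e f by blast
  note hb = sinv_inverse[OF aS, folded b_def]
  have cS: "c \<in> S" unfolding c_def using inverse_submonoid_zeroD(3)[OF S] hb(1) e f by blast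
  have "a * c * a = e * (f * f) * b * (e * e) * f" unfolding a_def c_def by (simp add: mult.assoc)
  then have aca: "a * c * a = a" using e f hb(2) unfolding a_def by (simp add: mult.assoc)
  have cc: "c * c = f * (b * a * b) * e" unfolding c_def a_def by (simp add: mult.assoc)
  have "c * a * c = f * b * (e * e) * (f * f) * b * e"
    unfolding c_def a_def by (simp add: mult.assoc)
  also have "\<dots> = f * (b * a * b) * e" using e f unfolding a_def by (simp add: mult.assoc)
  finally have cac: "c * a * c = c" using hb(3) unfolding c_def by simp
  have "c = b" using sinv_unique[OF aS cS aca cac] b_def by simp
  then have bb: "b * b = b" using cc hb(3) unfolding c_def by simp
  have "a = sinv S b" using sinv_unique[OF hb(1) aS] hb(2,3) by simp
  moreover have "b = sinv S b" using sinv_unique[OF hb(1) hb(1)] bb by simp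
  ultimately show ?thesis using bb a_def by simp
qed

lemma idems_commute:
  assumes e: "e \<in> S" "e * e = e" and f: "f \<in> S" "f * f = f"
  shows "e * f = f * e"
proof -
  have ef: "(e * f) * (e * f) = e * f" and fe: "(f * e) * (f * e) = f * e"
    using idems_mult_idem e f by blast+
  have efS: "e * f \<in> S" and feS: "f * e \<in> S" using inverse_submonoid_zeroD(3)[OF S] e f by auto
  have "e * f * (f * e) * (e * f) = e * (f * f) * (e * e) * f" by (simp add: mult.assoc)
  then have 1: "e * f * (f * e) * (e * f) = e * f" using e f ef by (simp add: mult.assoc)
  have "f * e * (e * f) * (f * e) = f * (e * e) * (f * f) * e" by (simp add: mult.assoc)
  then have 2: "f * e * (e * f) * (f * e) = f * e" using e f fe by (simp add: mult.assoc)
  have "e * f = sinv S (e * f)" using sinv_unique[OF efS efS] ef by simp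
  moreover have "f * e = sinv S (e * f)" using sinv_unique[OF efS feS 1 2] .
  ultimately show ?thesis by simp
qed

lemma boolean_closure_commute_idem:
  "x \<in> boolean_closure S \<Longrightarrow> (\<forall>y \<in> boolean_closure S. x * y = y * x) \<and> x * x = x"
proof (induction rule: boolean_closure.induct)
  case (idem e)
  then have e: "e \<in> S" "e * e = e" unfolding idems_def by auto
  have "e * y = y * e" if "y \<in> boolean_closure S" for y
    using that
  proof (induction rule: boolean_closure.induct)
    case (idem f) then show ?case using idems_commute e unfolding idems_def by auto
  next
    case (mult x y) then show ?case by (metis mult.assoc)
  next
    case (compl x) then show ?case by (simp add: algebra_simps)
  qed
  then show ?case using e by simp
next
  case (mult x y)
  then show ?case by (metis mult.assoc)
next
  case (compl x)
  then show ?case by (simp add: algebra_simps)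
qed

lemma idempotent_algebra_boolean_closure: "idempotent_algebra (boolean_closure S)"
proof
  have "0 \<in> idems S" "1 \<in> idems S" using inverse_submonoid_zeroD[OF S] unfolding idems_def by auto
  then show "0 \<in> boolean_closure S" "1 \<in> boolean_closure S" by (auto intro: boolean_closure.idem)
  show "x * y \<in> boolean_closure S" if "x \<in> boolean_closure S" "y \<in> boolean_closure S" for x y
    using boolean_closure.mult that .
  show "1 - x \<in> boolean_closure S" if "x \<in> boolean_closure S" for x
    using boolean_closure.compl that .
  show "x * y = y * x" "x * x = x" if "x \<in> boolean_closure S" "y \<in> boolean_closure S" for x y
    using boolean_closure_commute_idem that by blast+
qed

lemma idem_in_boolean_closure:
  assumes "s \<in> S" "s' \<in> S" "s * s' * s = s"
  shows "s * s' \<in> boolean_closure S"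
  using assms inverse_submonoid_zeroD(3)[OF S]
  by (intro boolean_closure.idem) (simp add: idems_def mult.assoc[symmetric])

text \<open>Conjugation by \<open>s\<close> is a homomorphism of Boolean algebras from the idempotents below
  \<open>s' s\<close> to those below \<open>s s'\<close>.\<close>
lemma boolean_closure_conj:
  assumes s: "s \<in> S" "s' \<in> S" "s * s' * s = s" "s' * s * s' = s'"
  shows "x \<in> boolean_closure S \<Longrightarrow> s * x * s' \<in> boolean_closure S"
proof (induction rule: boolean_closure.induct)
  case (idem e)
  then have e: "e \<in> S" "e * e = e" unfolding idems_def by auto
  have "s' * s \<in> S" "s' * s * (s' * s) = s' * s"
    using s inverse_submonoid_zeroD(3)[OF S] by (auto simp: mult.assoc[symmetric])
  then have c: "e * (s' * s) = (s' * s) * e" using idems_commute e by blast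
  have "s * e * s' * (s * e * s') = s * (e * (s' * s)) * e * s'" by (simp add: mult.assoc)
  also have "\<dots> = (s * s' * s) * (e * e) * s'" using c by (simp add: mult.assoc)
  finally have "s * e * s' * (s * e * s') = s * e * s'" using s e by simp
  moreover have "s * e * s' \<in> S" using inverse_submonoid_zeroD(3)[OF S] s e by blast
  ultimately show ?case by (intro boolean_closure.idem) (simp add: idems_def)
next
  case (mult x y)
  have c: "x * (s' * s) = (s' * s) * x"
    using boolean_closure_commute_idem[OF mult(1)] idem_in_boolean_closure[OF s(2,1,4)] by blast
  have "s * x * s' * (s * y * s') = s * (x * (s' * s)) * y * s'" by (simp add: mult.assoc)
  also have "\<dots> = (s * s' * s) * x * y * s'" using c by (simp add: mult.assoc)
  also have "\<dots> = s * (x * y) * s'" using s(3) by (simp add: mult.assoc[symmetric])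
  finally have "s * x * s' * (s * y * s') = s * (x * y) * s'" .
  then show ?case using boolean_closure.mult[OF mult(3) mult(4)] by simp
next
  case (compl x)
  have "s * s' * (1 - s * x * s') = s * s' - (s * s' * s) * x * s'"
    by (simp add: algebra_simps mult.assoc)
  also have "\<dots> = s * (1 - x) * s'" using s by (simp add: algebra_simps)
  finally show ?case
    using boolean_closure.mult[OF idem_in_boolean_closure[OF s(1-3)] boolean_closure.compl[OF compl(2)]]
    by simp
qed

lemma subset_normalizer_boolean_closure:
  "S \<subseteq> idempotent_algebra.normalizer (boolean_closure S)"
proof
  interpret idempotent_algebra "boolean_closure S" by (rule idempotent_algebra_boolean_closure)
  fix s assume s: "s \<in> S"
  note h = sinv_inverse[OF s]
  have "normal_inverse s (sinv S s)"
    unfolding normal_inverse_def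
    using h idem_in_boolean_closure[OF s h(1) h(2)] idem_in_boolean_closure[OF h(1) s h(3)]
      boolean_closure_conj[OF s h(1) h(2) h(3)] boolean_closure_conj[OF h(1) s h(3) h(2)]
    by blast
  then show "s \<in> normalizer" by (rule normalizerI)
qed

end

theorem proposition3p2:
  fixes S :: "'a::ring_1 set"
  assumes "inverse_submonoid_zero S"
  shows "\<exists>S''. boolean_inverse_submonoid S'' \<and> S \<subseteq> S''"
proof -
  interpret idempotent_algebra "boolean_closure S"
    by (rule idempotent_algebra_boolean_closure[OF assms])
  show ?thesis
    using boolean_inverse_submonoid_normalizer subset_normalizer_boolean_closure[OF assms] by blast
qed

end
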